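(* Let $p$ be a prime and $G=S^1\times C_p$. There exists a $G$-equivariant continuous map $h:S(V_{1,0}\oplus V_{1,1})\to S(V_{p,0}\oplus V_{0,1})$.
   Context: Let $a$ be a generator of $C_p$ and $\xi_p=e^{2\pi\sqrt{-1}/p}$. For $k\in\mathbb{Z}$ and $l\in\mathbb{Z}/p$, $V_{k,l}$ is the $1$-dimensional unitary $G$-representation on $\mathbb{C}$ with $(t,a^j)\cdot z=t^k\xi_p^{jl}z$ for $t\in S^1$. $S(\cdot)$ denotes the unit sphere. *)

theory Defs
  imports "HOL-Analysis.Analysis"
begin

definition xi :: "nat \<Rightarrow> complex" where
  "xi p = exp (2 * pi * \<i> / of_nat p)"

text \<open>Action of the group element (t, a^j) of S^1 x C_p on the one-dimensional
  representation V_{k,l} = C:  (t, a^j) . z = t^k xi_p^(j l) z.  The class l in Z/p is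
  represented by an integer; the action only depends on l mod p since xi_p^p = 1.\<close>
definition V_act :: "nat \<Rightarrow> int \<Rightarrow> int \<Rightarrow> complex \<Rightarrow> int \<Rightarrow> complex \<Rightarrow> complex" where
  "V_act p k l t j z = t powi k * xi p powi (j * l) * z"

definition dsum_act :: "nat \<Rightarrow> int \<Rightarrow> int \<Rightarrow> int \<Rightarrow> int \<Rightarrow> complex \<Rightarrow> int
    \<Rightarrow> complex \<times> complex \<Rightarrow> complex \<times> complex" where
  "dsum_act p k1 l1 k2 l2 t j x = (V_act p k1 l1 t j (fst x), V_act p k2 l2 t j (snd x))"

end

theory Submission
  imports Defs
begin

text \<open>The map \<open>(z, w) \<mapsto> (z^p + w^p, w \<cdot> conj z)\<close> vanishes only at the origin. On the
  source, \<open>(t, a^j)\<close> multiplies \<open>z\<close> by \<open>t\<close> and \<open>w\<close> by \<open>t \<xi>^j\<close>; since \<open>(\<xi>^j)^p = 1\<close> the first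
  component picks up the factor \<open>t^p\<close>, and in \<open>w \<cdot> conj z\<close> the factor \<open>t\<close> cancels against
  \<open>conj t\<close>, leaving \<open>\<xi>^j\<close>. So the map is equivariant, and as the target action is by
  isometries, normalising it gives the required map of spheres.\<close>

definition pow_sum_map :: "nat \<Rightarrow> complex \<times> complex \<Rightarrow> complex \<times> complex" where
  "pow_sum_map p x = (fst x ^ p + snd x ^ p, snd x * cnj (fst x))"

lemma continuous_on_pow_sum_map: "continuous_on S (pow_sum_map p)"
  unfolding pow_sum_map_def by (intro continuous_intros)

lemma xi_pow_eq_1: "p > 0 \<Longrightarrow> xi p ^ p = 1"
proof -
  assume "p > 0"
  have "xi p ^ p = exp (of_nat p * (2 * pi * \<i> / of_nat p))"
    unfolding xi_def by (simp only: exp_of_nat_mult)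
  also have "\<dots> = exp (2 * pi * \<i>)" using \<open>p > 0\<close> by simp
  finally show ?thesis by simp
qed

lemma xi_powi_pow_eq_1: "p > 0 \<Longrightarrow> (xi p powi j) ^ p = 1"
proof -
  assume "p > 0"
  have "(xi p powi j) ^ p = (xi p ^ p) powi j"
    by (metis power_int_mult power_int_of_nat mult.commute)
  thus ?thesis using xi_pow_eq_1[OF \<open>p > 0\<close>] by simp
qed

lemma norm_xi: "cmod (xi p) = 1"
  unfolding xi_def by (simp add: norm_exp_eq_Re)

lemma norm_V_act: "cmod t = 1 \<Longrightarrow> cmod (V_act p k l t j z) = cmod z"
  by (simp add: V_act_def norm_mult norm_power_int norm_xi)

lemma V_act_scaleR: "V_act p k l t j (c *\<^sub>R z) = c *\<^sub>R V_act p k l t j z"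
  by (simp add: V_act_def scaleR_conv_of_real)

lemma norm_dsum_act:
  "cmod t = 1 \<Longrightarrow> norm (dsum_act p k1 l1 k2 l2 t j x) = norm x"
  by (cases x) (simp add: dsum_act_def norm_Pair norm_V_act)

lemma dsum_act_scaleR:
  "dsum_act p k1 l1 k2 l2 t j (c *\<^sub>R x) = c *\<^sub>R dsum_act p k1 l1 k2 l2 t j x"
  by (cases x) (simp add: dsum_act_def V_act_scaleR)

lemma sgn_norm_preserving_homogeneous:
  fixes g :: "'a::real_normed_vector \<Rightarrow> 'b::real_normed_vector"
  assumes "norm (g x) = norm x" and "\<And>c. g (c *\<^sub>R x) = c *\<^sub>R g x"
  shows "sgn (g x) = g (sgn x)"
  by (simp add: sgn_div_norm assms)

lemma pow_sum_map_nonzero: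
  assumes "p > 0" and "x \<noteq> 0"
  shows "pow_sum_map p x \<noteq> 0"
proof
  assume zero: "pow_sum_map p x = 0"
  obtain z w where x: "x = (z, w)" by fastforce
  from zero have "z ^ p + w ^ p = 0" and "w = 0 \<or> z = 0"
    by (auto simp: pow_sum_map_def x zero_prod_def)
  with \<open>p > 0\<close> have "z = 0 \<and> w = 0" by (auto simp: zero_power)
  with \<open>x \<noteq> 0\<close> x show False by (simp add: zero_prod_def)
qed

lemma pow_sum_map_equivariant:
  assumes "p > 0" and "cmod t = 1"
  shows "pow_sum_map p (dsum_act p 1 0 1 1 t j x) = dsum_act p (int p) 0 0 1 t j (pow_sum_map p x)"
proof -
  obtain z w where x: "x = (z, w)" by fastforce
  define u where "u = xi p powi j"
  have "cnj t * t = 1"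
    using assms(2) complex_norm_square[of t] by (simp add: mult.commute)
  then have second: "t * u * w * cnj (t * z) = u * (w * cnj z)"
    by (metis (no_types) complex_cnj_mult mult.assoc mult.left_commute mult_1)
  have "(t * u * w) ^ p = t ^ p * w ^ p"
    using xi_powi_pow_eq_1[OF \<open>p > 0\<close>] by (simp add: u_def power_mult_distrib)
  then have first: "(t * z) ^ p + (t * u * w) ^ p = t ^ p * (z ^ p + w ^ p)"
    by (simp add: power_mult_distrib distrib_left)
  show ?thesis
    using first second
    by (simp add: pow_sum_map_def dsum_act_def V_act_def x u_def)
qed

theorem lemma4p2:
  fixes p :: nat
  assumes "prime p"
  shows "\<exists>h :: complex \<times> complex \<Rightarrow> complex \<times> complex.
           continuous_on (sphere 0 1) h \<and>
           h ` sphere 0 1 \<subseteq> sphere 0 1 \<and>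
           (\<forall>t j x. cmod t = 1 \<longrightarrow> x \<in> sphere 0 1 \<longrightarrow>
              h (dsum_act p 1 0 1 1 t j x) = dsum_act p (int p) 0 0 1 t j (h x))"
proof (intro exI[of _ "\<lambda>x. sgn (pow_sum_map p x)"] conjI allI impI)
  have "p > 0" using assms prime_gt_0_nat by blast
  then have nonzero: "\<forall>x\<in>sphere 0 1. pow_sum_map p x \<noteq> 0"
    by (intro ballI pow_sum_map_nonzero) auto
  show "continuous_on (sphere 0 1) (\<lambda>x. sgn (pow_sum_map p x))"
    using continuous_on_pow_sum_map nonzero by (rule continuous_on_sgn)
  show "(\<lambda>x. sgn (pow_sum_map p x)) ` sphere 0 1 \<subseteq> sphere 0 1"
    using nonzero by (auto simp: norm_sgn)
  fix t :: complex and j :: int and x :: "complex \<times> complex"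
  assume "cmod t = 1"
  show "sgn (pow_sum_map p (dsum_act p 1 0 1 1 t j x)) =
        dsum_act p (int p) 0 0 1 t j (sgn (pow_sum_map p x))"
    unfolding pow_sum_map_equivariant[OF \<open>p > 0\<close> \<open>cmod t = 1\<close>]
    by (rule sgn_norm_preserving_homogeneous[where g = "dsum_act p (int p) 0 0 1 t j"])
      (simp_all add: norm_dsum_act[OF \<open>cmod t = 1\<close>] dsum_act_scaleR)
qed

end
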